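(* Let $R$ be a commutative ring and $N$ the normalised Moore complex functor from simplicial sets to chain complexes of $R$-modules. Equipped with the Eilenberg–Zilber shuffle map as lax symmetric monoidal structure and the Alexander–Whitney map as oplax monoidal structure (and the identity $R\cong N(\Delta[0])$ on units), $N$ satisfies the compatibility conditions: for all simplicial sets $X,Y,U,V$, the composite $N(X\times Y)\otimes N(U\times V)\xrightarrow{\mathrm{aw}\otimes\mathrm{aw}}N X\otimes N Y\otimes N U\otimes N V\cong N X\otimes N U\otimes N Y\otimes N V\xrightarrow{\mathrm{sh}\otimes\mathrm{sh}}N(X\times U)\otimes N(Y\times V)$ equals $N(X\times Y)\otimes N(U\times V)\xrightarrow{\mathrm{sh}}N(X\times Y\times U\times V)\cong N(X\times U\times Y\times V)\xrightarrow{\mathrm{aw}}N(X\times U)\otimes N(Y\times V)$ (middle maps induced by the symmetries, with Koszul signs in chain complexes), and the three unit compatibility conditions (unit map followed by counit map is the identity; compatibility of the counit with $\mathrm{sh}$ on $N( * )\otimes N( * )$; compatibility of the unit with $\mathrm{aw}$ on $N( *\times * )$) hold. Consequently the images under $N$ of simplicial (coloured) operads are Hopf dg operads.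
   Context: $N(X)_k$ is the free $R$-module on non-degenerate $k$-simplices of $X$ (equivalently $R[X_k]$ modulo degenerate simplices), with differential $d(x)=\sum_{i=0}^k(-1)^id_i(x)$. The Eilenberg–Zilber map $\mathrm{sh}:N(X)\otimes N(Y)\to N(X\times Y)$ is natural and sends $1_n\otimes1_m$ (top simplices of $\Delta[n],\Delta[m]$) to $\sum_{a}\mathrm{sign}(a)\,a$, the sum over subsets $a\subset\{1,\dots,n+m\}$ of cardinality $n$, identified with non-degenerate $(n+m)$-simplices of $\Delta[n]\times\Delta[m]$, with $\mathrm{sign}(a)$ the sign of the corresponding $(n,m)$-shuffle. The Alexander–Whitney map $\mathrm{aw}:N(X\times Y)\to N(X)\otimes N(Y)$ sends $(x,y)\in X_n\times Y_n$ to $\sum_{p=0}^n x|_{\{0..p\}}\otimes y|_{\{p..n\}}$ (front face $\otimes$ back face). Simplicial sets are cartesian, so every simplicial operad is a cocommutative Hopf operad; a Hopf dg operad is a coassociative counital comonoid for the Hadamard tensor product of operads in chain complexes. *)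

theory Defs
  imports Main
begin

text \<open>A simplicial set is given by its sets of n-simplices and the action of
  simplicial operators: for x in X_n and a monotone map f : [m] \<rightarrow> [n]
  (represented as a function on nat, only its values on {0..m} matter),
  Act X n m f x is the simplex f^* x in X_m.\<close>

record 'a sset =
  Simp :: "nat \<Rightarrow> 'a set"
  Act  :: "nat \<Rightarrow> nat \<Rightarrow> (nat \<Rightarrow> nat) \<Rightarrow> 'a \<Rightarrow> 'a"

definition is_mor :: "nat \<Rightarrow> nat \<Rightarrow> (nat \<Rightarrow> nat) \<Rightarrow> bool" where
  "is_mor m n f \<longleftrightarrow> (\<forall>i\<le>m. f i \<le> n) \<and> (\<forall>i j. i \<le> j \<and> j \<le> m \<longrightarrow> f i \<le> f j)"

definition is_sset :: "'a sset \<Rightarrow> bool" where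
  "is_sset X \<longleftrightarrow>
     (\<forall>n m f x. x \<in> Simp X n \<and> is_mor m n f \<longrightarrow> Act X n m f x \<in> Simp X m) \<and>
     (\<forall>n m f g x. x \<in> Simp X n \<and> is_mor m n f \<and> (\<forall>i\<le>m. f i = g i)
                  \<longrightarrow> Act X n m f x = Act X n m g x) \<and>
     (\<forall>n x. x \<in> Simp X n \<longrightarrow> Act X n n (\<lambda>i. i) x = x) \<and>
     (\<forall>n m k f g x. x \<in> Simp X n \<and> is_mor m n f \<and> is_mor k m g
                  \<longrightarrow> Act X m k g (Act X n m f x) = Act X n k (f \<circ> g) x)"

definition prod_sset :: "'a sset \<Rightarrow> 'b sset \<Rightarrow> ('a \<times> 'b) sset" where
  "prod_sset X Y = \<lparr> Simp = (\<lambda>n. Simp X n \<times> Simp Y n),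
                     Act = (\<lambda>n m f p. (Act X n m f (fst p), Act Y n m f (snd p))) \<rparr>"

definition pt :: "unit sset" where
  "pt = \<lparr> Simp = (\<lambda>n. UNIV), Act = (\<lambda>n m f x. ()) \<rparr>"

text \<open>Degeneracy operator sigma_j : [n+1] \<rightarrow> [n]; s_j y = Act X n (n+1) (sdeg j) y.\<close>

definition sdeg :: "nat \<Rightarrow> nat \<Rightarrow> nat" where
  "sdeg j i = (if i \<le> j then i else i - 1)"

definition degenerate :: "'a sset \<Rightarrow> nat \<Rightarrow> 'a \<Rightarrow> bool" where
  "degenerate X k x \<longleftrightarrow>
     (\<exists>n j y. k = Suc n \<and> j \<le> n \<and> y \<in> Simp X n \<and> x = Act X n (Suc n) (sdeg j) y)"

definition nondeg :: "'a sset \<Rightarrow> nat \<Rightarrow> 'a \<Rightarrow> bool" where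
  "nondeg X k x \<longleftrightarrow> x \<in> Simp X k \<and> \<not> degenerate X k x"

text \<open>Basis of N(X): pairs (k,x) with x a non-degenerate k-simplex.
  Basis of N(X) \<otimes> N(Y): pairs of such; the degree of (k,x) is k.\<close>

definition Nbasis :: "'a sset \<Rightarrow> (nat \<times> 'a) set" where
  "Nbasis X = {(k, x). nondeg X k x}"

definition fin_chain :: "'b set \<Rightarrow> ('b \<Rightarrow> 'r::zero) \<Rightarrow> bool" where
  "fin_chain B c \<longleftrightarrow> finite {b. c b \<noteq> 0} \<and> {b. c b \<noteq> 0} \<subseteq> B"

definition lin :: "('b \<Rightarrow> 'c \<Rightarrow> 'r::comm_ring_1) \<Rightarrow> ('b \<Rightarrow> 'r) \<Rightarrow> 'c \<Rightarrow> 'r" where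
  "lin F c = (\<lambda>t. \<Sum>b\<in>{b. c b \<noteq> 0}. c b * F b t)"

definition gen :: "'a sset \<Rightarrow> nat \<times> 'a \<Rightarrow> nat \<times> 'a \<Rightarrow> 'r::comm_ring_1" where
  "gen X b = (\<lambda>t. if t = b \<and> b \<in> Nbasis X then 1 else 0)"

definition gen2 :: "'a sset \<Rightarrow> 'b sset \<Rightarrow> nat \<times> 'a \<Rightarrow> nat \<times> 'b
                    \<Rightarrow> (nat \<times> 'a) \<times> (nat \<times> 'b) \<Rightarrow> 'r::comm_ring_1" where
  "gen2 X Y a b = (\<lambda>t. if t = (a, b) \<and> a \<in> Nbasis X \<and> b \<in> Nbasis Y then 1 else 0)"

definition Nmap :: "'b sset \<Rightarrow> ('a \<Rightarrow> 'b) \<Rightarrow> nat \<times> 'a \<Rightarrow> nat \<times> 'b \<Rightarrow> 'r::comm_ring_1" where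
  "Nmap X' phi b = gen X' (fst b, phi (snd b))"

definition front_face :: "'a sset \<Rightarrow> nat \<Rightarrow> nat \<Rightarrow> 'a \<Rightarrow> 'a" where
  "front_face X n p x = Act X n p (\<lambda>i. i) x"

definition back_face :: "'a sset \<Rightarrow> nat \<Rightarrow> nat \<Rightarrow> 'a \<Rightarrow> 'a" where
  "back_face X n p x = Act X n (n - p) (\<lambda>i. i + p) x"

definition aw :: "'a sset \<Rightarrow> 'b sset \<Rightarrow> nat \<times> ('a \<times> 'b)
                  \<Rightarrow> (nat \<times> 'a) \<times> (nat \<times> 'b) \<Rightarrow> 'r::comm_ring_1" where
  "aw X Y b = (\<lambda>t. \<Sum>p\<in>{0..fst b}.
       gen2 X Y (p, front_face X (fst b) p (fst (snd b))) (fst b - p, back_face Y (fst b) p (snd (snd b))) t)"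

definition shuffles :: "nat \<Rightarrow> nat \<Rightarrow> nat set set" where
  "shuffles p q = {a. a \<subseteq> {1..p+q} \<and> card a = p}"

definition sh_alpha :: "nat set \<Rightarrow> nat \<Rightarrow> nat" where
  "sh_alpha a i = card (a \<inter> {1..i})"

definition sh_beta :: "nat set \<Rightarrow> nat \<Rightarrow> nat" where
  "sh_beta a i = i - sh_alpha a i"

text \<open>Sign of the shuffle permutation: parity of its number of inversions.\<close>

definition sh_sign :: "nat set \<Rightarrow> 'r::comm_ring_1" where
  "sh_sign a = (-1) ^ card {(i, j). i \<in> a \<and> j \<notin> a \<and> 1 \<le> j \<and> j < i}"

definition sh :: "'a sset \<Rightarrow> 'b sset \<Rightarrow> (nat \<times> 'a) \<times> (nat \<times> 'b)
                  \<Rightarrow> nat \<times> ('a \<times> 'b) \<Rightarrow> 'r::comm_ring_1" where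
  "sh X Y t = (\<lambda>b. \<Sum>a\<in>shuffles (fst (fst t)) (fst (snd t)).
       sh_sign a * gen (prod_sset X Y)
         (fst (fst t) + fst (snd t),
          (Act X (fst (fst t)) (fst (fst t) + fst (snd t)) (sh_alpha a) (snd (fst t)),
           Act Y (fst (snd t)) (fst (fst t) + fst (snd t)) (sh_beta a) (snd (snd t)))) b)"

text \<open>Tensor product of two degree-0 maps (no Koszul sign arises).\<close>

definition tens :: "('a \<Rightarrow> 'c \<Rightarrow> 'r::comm_ring_1) \<Rightarrow> ('b \<Rightarrow> 'd \<Rightarrow> 'r)
                    \<Rightarrow> 'a \<times> 'b \<Rightarrow> 'c \<times> 'd \<Rightarrow> 'r" where
  "tens F G s t = F (fst s) (fst t) * G (snd s) (snd t)"

definition mid_sym :: "((nat \<times> 'x) \<times> (nat \<times> 'y)) \<times> ((nat \<times> 'u) \<times> (nat \<times> 'v))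
     \<Rightarrow> ((nat \<times> 'x) \<times> (nat \<times> 'u)) \<times> ((nat \<times> 'y) \<times> (nat \<times> 'v)) \<Rightarrow> 'r::comm_ring_1" where
  "mid_sym s t = (if t = ((fst (fst s), fst (snd s)), (snd (fst s), snd (snd s)))
                  then (-1) ^ (fst (snd (fst s)) * fst (fst (snd s))) else 0)"

definition perm4 :: "('x \<times> 'y) \<times> ('u \<times> 'v) \<Rightarrow> ('x \<times> 'u) \<times> ('y \<times> 'v)" where
  "perm4 s = ((fst (fst s), fst (snd s)), (snd (fst s), snd (snd s)))"

definition eta :: "'r \<Rightarrow> nat \<times> unit \<Rightarrow> 'r::comm_ring_1" where
  "eta r = (\<lambda>b. if b = (0, ()) then r else 0)"

definition epsN :: "(nat \<times> unit \<Rightarrow> 'r::comm_ring_1) \<Rightarrow> 'r" where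
  "epsN c = c (0, ())"

end

theory Submission
  imports Defs
begin

text \<open>
  On a basis element \<open>(x, y) \<otimes> (u, v)\<close> of degrees \<open>n, m\<close> both composites are signed sums of
  pairs of simplices. The left side runs over Alexander--Whitney cuts \<open>p \<le> n\<close>, \<open>r \<le> m\<close> and
  shuffles \<open>a1\<close> of \<open>(p, r)\<close>, \<open>a2\<close> of \<open>(n - p, m - r)\<close>; the right side runs over shuffles \<open>A\<close> of
  \<open>(n, m)\<close> and cuts \<open>k \<le> n + m\<close>. Concatenating \<open>a1\<close> with \<open>a2\<close> shifted by \<open>k = p + r\<close> is a
  bijection between the two index sets, under which the front and back \<open>k\<close>-faces of the
  \<open>A\<close>-shuffle are the \<open>a1\<close>- and \<open>a2\<close>-shuffles of the faces, and the sign of \<open>A\<close> is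
  \<open>(-1)^((n - p) r)\<close> times the signs of \<open>a1\<close> and \<open>a2\<close>, which is exactly the Koszul sign of the
  middle symmetry. The normalisation conditions match because a shuffle of a degenerate simplex
  is degenerate, and a degenerate simplex has a degenerate front or back face at every cut.
  The unit conditions are direct computations in \<open>N(*)\<close>, which is \<open>R\<close> concentrated in degree 0.
\<close>

section \<open>Finitely supported coefficient functions\<close>

definition delta :: "'a \<Rightarrow> 'a \<Rightarrow> 'r::comm_ring_1" where
  "delta e s = (if s = e then 1 else 0)"

lemma gen_eq: "gen X b = (\<lambda>s. of_bool (b \<in> Nbasis X) * delta b s)"
  by (auto simp: gen_def delta_def)

lemma gen2_eq: "gen2 X Y a b = (\<lambda>s. of_bool (a \<in> Nbasis X \<and> b \<in> Nbasis Y) * delta (a, b) s)"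
  by (auto simp: gen2_def delta_def)

lemma gen2_eq_gen_times_gen: "gen2 X Y a b t = gen X a (fst t) * gen Y b (snd t)"
  by (cases t) (auto simp: gen2_def gen_def)

lemma lin_eq_sum_superset:
  assumes "finite S" and "{b. c b \<noteq> 0} \<subseteq> S"
  shows "lin F c t = (\<Sum>b\<in>S. c b * F b t)"
  unfolding lin_def by (rule sum.mono_neutral_left) (use assms in auto)

lemma lin_eq_single:
  assumes "\<And>b. b \<noteq> b0 \<Longrightarrow> c b = 0"
  shows "lin F c t = c b0 * F b0 t"
  using lin_eq_sum_superset[of "{b0}" c F t] assms by auto

lemma lin_cong: "(\<And>b. c b \<noteq> 0 \<Longrightarrow> F b = G b) \<Longrightarrow> lin F c = lin G c"
  unfolding lin_def by (auto intro!: sum.cong)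

lemma lin_lin:
  assumes fc: "finite {b. c b \<noteq> 0}" and fF: "\<And>b. c b \<noteq> 0 \<Longrightarrow> finite {s. F b s \<noteq> 0}"
  shows "lin G (lin F c) = lin (\<lambda>b. lin G (F b)) c"
proof
  fix t
  define C where "C = {b. c b \<noteq> 0}"
  define S where "S = (\<Union>b\<in>C. {s. F b s \<noteq> 0})"
  have fS: "finite S" unfolding S_def C_def using fc fF by auto
  have "{s. lin F c s \<noteq> 0} \<subseteq> S"
  proof
    fix s assume "s \<in> {s. lin F c s \<noteq> 0}"
    then have "(\<Sum>b\<in>C. c b * F b s) \<noteq> 0" by (simp add: lin_def C_def)
    then obtain b where "b \<in> C" "c b * F b s \<noteq> 0" by (meson sum.neutral)
    then show "s \<in> S" by (auto simp: S_def intro!: bexI[of _ b])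
  qed
  then have "lin G (lin F c) t = (\<Sum>s\<in>S. lin F c s * G s t)"
    by (rule lin_eq_sum_superset[OF fS])
  also have "\<dots> = (\<Sum>b\<in>C. \<Sum>s\<in>S. c b * F b s * G s t)"
    by (simp add: lin_def C_def sum_distrib_right sum.swap[of _ S])
  also have "\<dots> = (\<Sum>b\<in>C. c b * lin G (F b) t)"
  proof (rule sum.cong[OF refl])
    fix b assume "b \<in> C"
    then have "lin G (F b) t = (\<Sum>s\<in>S. F b s * G s t)"
      by (intro lin_eq_sum_superset[OF fS]) (auto simp: S_def)
    then show "(\<Sum>s\<in>S. c b * F b s * G s t) = c b * lin G (F b) t"
      by (simp add: sum_distrib_left mult.assoc)
  qed
  finally show "lin G (lin F c) t = lin (\<lambda>b. lin G (F b)) c t"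
    by (simp add: lin_def C_def)
qed

lemma support_sum_delta_subset:
  "{s. (\<Sum>i\<in>I. w i * delta (e i) s) \<noteq> (0::'r::comm_ring_1)} \<subseteq> e ` I"
proof
  fix s assume "s \<in> {s. (\<Sum>i\<in>I. w i * delta (e i) s) \<noteq> (0::'r)}"
  then obtain i where "i \<in> I" "w i * delta (e i) s \<noteq> (0::'r)"
    by (meson mem_Collect_eq sum.neutral)
  then show "s \<in> e ` I" by (auto simp: delta_def split: if_splits)
qed

lemma lin_sum_delta:
  fixes w :: "'i \<Rightarrow> 'r::comm_ring_1"
  assumes "finite I"
  shows "lin G (\<lambda>s. \<Sum>i\<in>I. w i * delta (e i) s) = (\<lambda>t. \<Sum>i\<in>I. w i * G (e i) t)"
proof
  fix t
  have "lin G (\<lambda>s. \<Sum>i\<in>I. w i * delta (e i) s) t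
      = (\<Sum>b\<in>e ` I. \<Sum>i\<in>I. w i * delta (e i) b * G b t)"
    using assms support_sum_delta_subset[of w e I]
    by (subst lin_eq_sum_superset[of "e ` I"]) (auto simp: sum_distrib_right)
  also have "\<dots> = (\<Sum>i\<in>I. \<Sum>b\<in>e ` I. if e i = b then w i * G b t else 0)"
    by (subst sum.swap) (auto simp: delta_def intro!: sum.cong)
  also have "\<dots> = (\<Sum>i\<in>I. w i * G (e i) t)"
    using assms by (simp add: sum.delta)
  finally show "lin G (\<lambda>s. \<Sum>i\<in>I. w i * delta (e i) s) t = (\<Sum>i\<in>I. w i * G (e i) t)" .
qed

lemma sum_delta_times_sum_delta:
  fixes w :: "'i \<Rightarrow> 'r::comm_ring_1"
  shows "(\<Sum>i\<in>I. w i * delta (e i) (fst s)) * (\<Sum>j\<in>J. w' j * delta (e' j) (snd s))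
       = (\<Sum>q\<in>I \<times> J. w (fst q) * w' (snd q) * delta (e (fst q), e' (snd q)) s)"
  by (auto simp: sum_product sum.cartesian_product delta_def prod_eq_iff split_def
      intro!: sum.cong)

lemma finite_support_sum:
  assumes "finite I" and "\<And>i. i \<in> I \<Longrightarrow> finite {s. f i s \<noteq> 0}"
  shows "finite {s. (\<Sum>i\<in>I. f i s) \<noteq> (0::'r::comm_monoid_add)}"
proof (rule finite_subset[of _ "\<Union>i\<in>I. {s. f i s \<noteq> 0}"])
  show "{s. (\<Sum>i\<in>I. f i s) \<noteq> 0} \<subseteq> (\<Union>i\<in>I. {s. f i s \<noteq> 0})"
    by (auto intro: sum.neutral)
qed (use assms in auto)

lemma finite_support_mult_left: "finite {s. f s \<noteq> 0} \<Longrightarrow> finite {s. c * f s \<noteq> (0::'r::mult_zero)}"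
  by (rule finite_subset[of _ "{s. f s \<noteq> 0}"]) auto

lemma finite_support_gen: "finite {s. gen X b s \<noteq> 0}"
  by (rule finite_subset[of _ "{b}"]) (auto simp: gen_def)

lemma finite_support_gen2: "finite {s. gen2 X Y a b s \<noteq> 0}"
  by (rule finite_subset[of _ "{(a, b)}"]) (auto simp: gen2_def)

lemma finite_support_mid_sym: "finite {s. mid_sym b s \<noteq> 0}"
  by (rule finite_subset[of _ "{((fst (fst b), fst (snd b)), (snd (fst b), snd (snd b)))}"])
    (auto simp: mid_sym_def)

lemma finite_support_aw: "finite {s. aw X Y b s \<noteq> 0}"
  unfolding aw_def by (intro finite_support_sum finite_support_gen2) simp

lemma finite_support_Nmap: "finite {s. Nmap X phi b s \<noteq> 0}"
  unfolding Nmap_def by (rule finite_support_gen)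

lemma finite_support_tens:
  assumes "finite {s. F (fst b) s \<noteq> 0}" and "finite {s. G (snd b) s \<noteq> 0}"
  shows "finite {s. tens F G b s \<noteq> 0}"
  by (rule finite_subset[of _ "{s. F (fst b) s \<noteq> 0} \<times> {s. G (snd b) s \<noteq> 0}"])
    (use assms in \<open>auto simp: tens_def\<close>)

lemma finite_support_lin:
  assumes "finite {b. c b \<noteq> 0}" and "\<And>b. c b \<noteq> 0 \<Longrightarrow> finite {s. F b s \<noteq> 0}"
  shows "finite {s. lin F c s \<noteq> 0}"
  unfolding lin_def using assms by (intro finite_support_sum finite_support_mult_left) auto

lemma scaled_sum_times_sum:
  fixes c :: "'a::comm_semiring_0"
  shows "c * ((\<Sum>i\<in>I. f i) * (\<Sum>j\<in>J. g j)) = (\<Sum>(i, j)\<in>I \<times> J. c * (f i * g j))"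
  by (subst sum_product) (simp add: sum_distrib_left sum.cartesian_product split_def)

section \<open>Simplicial sets and degeneracies\<close>

lemma Simp_prod_sset [simp]: "Simp (prod_sset X Y) n = Simp X n \<times> Simp Y n"
  by (simp add: prod_sset_def)

lemma Act_prod_sset [simp]: "Act (prod_sset X Y) n m f z = (Act X n m f (fst z), Act Y n m f (snd z))"
  by (simp add: prod_sset_def)

lemma is_sset_prod_sset: "is_sset X \<Longrightarrow> is_sset Y \<Longrightarrow> is_sset (prod_sset X Y)"
  unfolding is_sset_def prod_sset_def by (auto simp: mem_Times_iff)

lemma Nbasis_iff: "(k, z) \<in> Nbasis X \<longleftrightarrow> z \<in> Simp X k \<and> \<not> degenerate X k z"
  by (simp add: Nbasis_def nondeg_def)

lemma is_mor_id: "p \<le> n \<Longrightarrow> is_mor p n (\<lambda>i. i)"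
  by (auto simp: is_mor_def)

lemma is_mor_shift: "p \<le> n \<Longrightarrow> is_mor (n - p) n (\<lambda>i. i + p)"
  by (auto simp: is_mor_def)

lemma is_mor_sdeg: "j < k \<Longrightarrow> is_mor k (k - 1) (sdeg j)"
  by (auto simp: is_mor_def sdeg_def)

lemma is_mor_comp: "is_mor m n f \<Longrightarrow> is_mor k m g \<Longrightarrow> is_mor k n (f \<circ> g)"
  unfolding is_mor_def by auto

context
  fixes W :: "'a sset"
  assumes W: "is_sset W"
begin

lemma Act_in: "x \<in> Simp W n \<Longrightarrow> is_mor m n f \<Longrightarrow> Act W n m f x \<in> Simp W m"
  using W unfolding is_sset_def by blast

lemma Act_cong:
  "x \<in> Simp W n \<Longrightarrow> is_mor m n f \<Longrightarrow> (\<And>i. i \<le> m \<Longrightarrow> f i = g i)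
   \<Longrightarrow> Act W n m f x = Act W n m g x"
  using W unfolding is_sset_def by blast

lemma Act_Act:
  assumes "x \<in> Simp W n" "is_mor m n f" "is_mor k m g" "\<And>i. i \<le> k \<Longrightarrow> f (g i) = h i"
  shows "Act W m k g (Act W n m f x) = Act W n k h x"
proof -
  have "Act W m k g (Act W n m f x) = Act W n k (f \<circ> g) x"
    using W assms(1-3) unfolding is_sset_def by blast
  also have "\<dots> = Act W n k h x"
    using assms by (intro Act_cong is_mor_comp) auto
  finally show ?thesis .
qed

lemma front_face_in: "x \<in> Simp W n \<Longrightarrow> p \<le> n \<Longrightarrow> front_face W n p x \<in> Simp W p"
  unfolding front_face_def by (simp add: Act_in is_mor_id)

lemma back_face_in: "x \<in> Simp W n \<Longrightarrow> p \<le> n \<Longrightarrow> back_face W n p x \<in> Simp W (n - p)"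
  unfolding back_face_def by (simp add: Act_in is_mor_shift)

lemma front_face_Act:
  "x \<in> Simp W n \<Longrightarrow> is_mor N n f \<Longrightarrow> k \<le> N \<Longrightarrow> front_face W N k (Act W n N f x) = Act W n k f x"
  unfolding front_face_def by (rule Act_Act) (auto intro: is_mor_id)

lemma back_face_Act:
  "x \<in> Simp W n \<Longrightarrow> is_mor N n f \<Longrightarrow> k \<le> N
   \<Longrightarrow> back_face W N k (Act W n N f x) = Act W n (N - k) (\<lambda>i. f (i + k)) x"
  unfolding back_face_def by (rule Act_Act) (auto intro: is_mor_shift)

lemma Act_front_face:
  "x \<in> Simp W n \<Longrightarrow> p \<le> n \<Longrightarrow> is_mor k p g \<Longrightarrow> Act W p k g (front_face W n p x) = Act W n k g x"
  unfolding front_face_def by (rule Act_Act) (auto intro: is_mor_id)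

lemma Act_back_face:
  "x \<in> Simp W n \<Longrightarrow> p \<le> n \<Longrightarrow> is_mor k (n - p) g
   \<Longrightarrow> Act W (n - p) k g (back_face W n p x) = Act W n k (\<lambda>i. g i + p) x"
  unfolding back_face_def by (rule Act_Act) (auto intro: is_mor_shift)

end

definition coface :: "nat \<Rightarrow> nat \<Rightarrow> nat" where
  "coface i l = (if l < i then l else Suc l)"

lemma Act_eq_degeneracy_if_repeat:
  assumes W: "is_sset W" and x: "x \<in> Simp W n" and f: "is_mor k n f" and "j < k"
    and "f j = f (Suc j)"
  shows "Act W n k f x = Act W (k - 1) k (sdeg j) (Act W n (k - 1) (f \<circ> coface (Suc j)) x)"
proof -
  have "is_mor (k - 1) n (f \<circ> coface (Suc j))"
    using f \<open>j < k\<close> unfolding is_mor_def coface_def by auto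
  moreover have "(f \<circ> coface (Suc j)) (sdeg j i) = f i" for i
    using \<open>f j = f (Suc j)\<close> by (cases "i \<le> j"; cases "i = Suc j") (auto simp: sdeg_def coface_def)
  ultimately show ?thesis
    using assms by (intro Act_Act[symmetric] is_mor_sdeg) auto
qed

lemma degenerate_if_repeat:
  assumes W: "is_sset W" and x: "x \<in> Simp W n" and f: "is_mor k n f" and "j < k"
    and "f j = f (Suc j)"
  shows "degenerate W k (Act W n k f x)"
proof -
  have "is_mor (k - 1) n (f \<circ> coface (Suc j))"
    using f \<open>j < k\<close> unfolding is_mor_def coface_def by auto
  then show ?thesis
    using Act_eq_degeneracy_if_repeat[OF assms] Act_in[OF W x] \<open>j < k\<close>
    unfolding degenerate_def by (intro exI[of _ "k - 1"] exI[of _ j]) auto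
qed

lemma degenerate_pair_if_repeat:
  assumes X: "is_sset X" and U: "is_sset U" and x: "x \<in> Simp X n1" and u: "u \<in> Simp U n2"
    and f: "is_mor k n1 f" and g: "is_mor k n2 g" and "j < k"
    and "f j = f (Suc j)" and "g j = g (Suc j)"
  shows "degenerate (prod_sset X U) k (Act X n1 k f x, Act U n2 k g u)"
proof -
  have "is_mor (k - 1) n1 (f \<circ> coface (Suc j))" "is_mor (k - 1) n2 (g \<circ> coface (Suc j))"
    using f g \<open>j < k\<close> unfolding is_mor_def coface_def by auto
  then have "(Act X n1 (k - 1) (f \<circ> coface (Suc j)) x, Act U n2 (k - 1) (g \<circ> coface (Suc j)) u)
      \<in> Simp (prod_sset X U) (k - 1)"
    using Act_in[OF X x] Act_in[OF U u] by simp
  then show ?thesis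
    using Act_eq_degeneracy_if_repeat[OF X x f] Act_eq_degeneracy_if_repeat[OF U u g] assms(7-9)
    unfolding degenerate_def
    by (intro exI[of _ "k - 1"] exI[of _ j]) auto
qed

lemma degenerate_front_or_back_face:
  assumes W: "is_sset W" and W': "is_sset W'"
    and deg: "degenerate (prod_sset W W') N (z, z')" and "k \<le> N"
  shows "degenerate W k (front_face W N k z) \<or> degenerate W' (N - k) (back_face W' N k z')"
proof -
  obtain N' j w w' where N: "N = Suc N'" and "j \<le> N'" and w: "w \<in> Simp W N'" and w': "w' \<in> Simp W' N'"
    and z: "z = Act W N' N (sdeg j) w" and z': "z' = Act W' N' N (sdeg j) w'"
    using deg unfolding degenerate_def by auto
  have s: "is_mor N N' (sdeg j)"
    using is_mor_sdeg[of j N] \<open>j \<le> N'\<close> N by simp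
  show ?thesis
  proof (cases "j < k")
    case True
    have "front_face W N k z = Act W N' k (sdeg j) w"
      unfolding z using front_face_Act[OF W w s \<open>k \<le> N\<close>] .
    moreover have "degenerate W k (Act W N' k (sdeg j) w)"
      using True \<open>k \<le> N\<close> N \<open>j \<le> N'\<close>
      by (intro degenerate_if_repeat[OF W w]) (auto simp: is_mor_def sdeg_def)
    ultimately show ?thesis by simp
  next
    case False
    have "back_face W' N k z' = Act W' N' (N - k) (\<lambda>i. sdeg j (i + k)) w'"
      unfolding z' using back_face_Act[OF W' w' s \<open>k \<le> N\<close>] .
    moreover have "degenerate W' (N - k) (Act W' N' (N - k) (\<lambda>i. sdeg j (i + k)) w')"
      using False \<open>k \<le> N\<close> N \<open>j \<le> N'\<close>
      by (intro degenerate_if_repeat[OF W' w', of _ _ "j - k"]) (auto simp: is_mor_def sdeg_def)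
    ultimately show ?thesis by simp
  qed
qed

lemma front_face_prod_sset:
  "front_face (prod_sset X Y) n p z = (front_face X n p (fst z), front_face Y n p (snd z))"
  by (simp add: front_face_def)

lemma back_face_prod_sset:
  "back_face (prod_sset X Y) n p z = (back_face X n p (fst z), back_face Y n p (snd z))"
  by (simp add: back_face_def)

lemma Nbasis_perm4_iff:
  "(k, perm4 z) \<in> Nbasis (prod_sset (prod_sset X U) (prod_sset Y V))
   \<longleftrightarrow> (k, z) \<in> Nbasis (prod_sset (prod_sset X Y) (prod_sset U V))"
proof -
  have "degenerate (prod_sset (prod_sset X U) (prod_sset Y V)) k (perm4 z)
    \<longleftrightarrow> degenerate (prod_sset (prod_sset X Y) (prod_sset U V)) k z"
    unfolding degenerate_def
  proof (intro iffI; elim exE conjE)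
    fix n j w
    assume "k = Suc n" "j \<le> n" "w \<in> Simp (prod_sset (prod_sset X U) (prod_sset Y V)) n"
      "perm4 z = Act (prod_sset (prod_sset X U) (prod_sset Y V)) n (Suc n) (sdeg j) w"
    then show "\<exists>n j w. k = Suc n \<and> j \<le> n \<and> w \<in> Simp (prod_sset (prod_sset X Y) (prod_sset U V)) n
        \<and> z = Act (prod_sset (prod_sset X Y) (prod_sset U V)) n (Suc n) (sdeg j) w"
      by (intro exI[of _ n] exI[of _ j] exI[of _ "perm4 w"])
        (auto simp: perm4_def prod_eq_iff mem_Times_iff)
  next
    fix n j w
    assume "k = Suc n" "j \<le> n" "w \<in> Simp (prod_sset (prod_sset X Y) (prod_sset U V)) n"
      "z = Act (prod_sset (prod_sset X Y) (prod_sset U V)) n (Suc n) (sdeg j) w"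
    then show "\<exists>n j w. k = Suc n \<and> j \<le> n \<and> w \<in> Simp (prod_sset (prod_sset X U) (prod_sset Y V)) n
        \<and> perm4 z = Act (prod_sset (prod_sset X U) (prod_sset Y V)) n (Suc n) (sdeg j) w"
      by (intro exI[of _ n] exI[of _ j] exI[of _ "perm4 w"])
        (auto simp: perm4_def prod_eq_iff mem_Times_iff)
  qed
  then show ?thesis
    by (auto simp: Nbasis_iff perm4_def mem_Times_iff)
qed

lemma Nbasis_pt: "(k, z) \<in> Nbasis pt \<longleftrightarrow> k = 0"
proof -
  have "degenerate pt (Suc n) z" for n
    unfolding degenerate_def by (intro exI[of _ n] exI[of _ 0] exI[of _ "()"]) (simp add: pt_def)
  then show ?thesis
    by (cases k) (auto simp: Nbasis_iff degenerate_def pt_def)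
qed

lemma Nbasis_pt_pt: "(0, z) \<in> Nbasis (prod_sset pt pt)"
  by (simp add: Nbasis_iff degenerate_def pt_def)

section \<open>Shuffles\<close>

lemma finite_shuffles: "finite (shuffles p q)"
  by (rule finite_subset[of _ "Pow {1..p+q}"]) (auto simp: shuffles_def)

lemma in_shufflesD: "a \<in> shuffles p q \<Longrightarrow> a \<subseteq> {1..p+q} \<and> card a = p \<and> finite a"
  by (auto simp: shuffles_def intro: finite_subset)

lemma sh_alpha_0 [simp]: "sh_alpha a 0 = 0"
  by (simp add: sh_alpha_def)

lemma sh_alpha_Suc: "finite a \<Longrightarrow> sh_alpha a (Suc i) = sh_alpha a i + of_bool (Suc i \<in> a)"
proof -
  assume "finite a"
  have "a \<inter> {1..Suc i} = (if Suc i \<in> a then insert (Suc i) (a \<inter> {1..i}) else a \<inter> {1..i})"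
    by (auto simp: le_Suc_eq)
  then show ?thesis
    using \<open>finite a\<close> by (simp add: sh_alpha_def)
qed

lemma sh_alpha_le: "sh_alpha a i \<le> i"
  using card_mono[of "{1..i}" "a \<inter> {1..i}"] by (simp add: sh_alpha_def)

lemma sh_alpha_mono: "i \<le> j \<Longrightarrow> sh_alpha a i \<le> sh_alpha a j"
  unfolding sh_alpha_def by (rule card_mono) auto

lemma sh_beta_Suc: "finite a \<Longrightarrow> sh_beta a (Suc i) = sh_beta a i + of_bool (Suc i \<notin> a)"
  using sh_alpha_Suc[of a i] sh_alpha_le[of a i] by (simp add: sh_beta_def)

lemma sh_beta_mono: "finite a \<Longrightarrow> i \<le> j \<Longrightarrow> sh_beta a i \<le> sh_beta a j"
  by (rule lift_Suc_mono_le) (simp_all add: sh_beta_Suc)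

lemma sh_alpha_top: "a \<in> shuffles p q \<Longrightarrow> sh_alpha a (p + q) = p"
  by (auto simp: sh_alpha_def shuffles_def Int_absorb2)

lemma sh_beta_top: "a \<in> shuffles p q \<Longrightarrow> sh_beta a (p + q) = q"
  by (simp add: sh_beta_def sh_alpha_top)

lemma is_mor_sh_alpha: "a \<in> shuffles p q \<Longrightarrow> is_mor (p + q) p (sh_alpha a)"
  using sh_alpha_mono[of _ "p + q" a] sh_alpha_top[of a p q]
  by (auto simp: is_mor_def intro: sh_alpha_mono order_trans)

lemma is_mor_sh_beta: "a \<in> shuffles p q \<Longrightarrow> is_mor (p + q) q (sh_beta a)"
  using sh_beta_mono[of a _ "p + q"] sh_beta_top[of a p q] in_shufflesD[of a p q]
  by (auto simp: is_mor_def intro: sh_beta_mono)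

lemma exists_step:
  fixes f :: "nat \<Rightarrow> nat"
  assumes "f 0 = 0" and "\<And>i. f (Suc i) \<le> Suc (f i)" and "Suc c \<le> f k"
  shows "\<exists>j<k. f j = c \<and> f (Suc j) = Suc c"
  using assms(3)
proof (induction k)
  case 0
  then show ?case using assms(1) by simp
next
  case (Suc k)
  show ?case
  proof (cases "Suc c \<le> f k")
    case True
    then show ?thesis using Suc.IH less_SucI by blast
  next
    case False
    then have "f k = c" "f (Suc k) = Suc c"
      using Suc.prems assms(2)[of k] by simp_all
    then show ?thesis by blast
  qed
qed

lemma exists_step_sh_alpha:
  assumes a: "a \<in> shuffles p q" and "i < p"
  shows "\<exists>j<p+q. sh_alpha a j = i \<and> sh_alpha a (Suc j) = Suc i \<and> sh_beta a j = sh_beta a (Suc j)"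
proof -
  have fa: "finite a" using in_shufflesD[OF a] by simp
  obtain j where j: "j < p + q" "sh_alpha a j = i" "sh_alpha a (Suc j) = Suc i"
    using exists_step[of "sh_alpha a" i "p + q"] sh_alpha_Suc[OF fa] sh_alpha_top[OF a] \<open>i < p\<close>
    by fastforce
  then show ?thesis
    using sh_alpha_Suc[OF fa, of j] sh_beta_Suc[OF fa, of j] by (cases "Suc j \<in> a") auto
qed

lemma exists_step_sh_beta:
  assumes a: "a \<in> shuffles p q" and "i < q"
  shows "\<exists>j<p+q. sh_beta a j = i \<and> sh_beta a (Suc j) = Suc i \<and> sh_alpha a j = sh_alpha a (Suc j)"
proof -
  have fa: "finite a" using in_shufflesD[OF a] by simp
  obtain j where j: "j < p + q" "sh_beta a j = i" "sh_beta a (Suc j) = Suc i"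
    using exists_step[of "sh_beta a" i "p + q"] sh_beta_Suc[OF fa] sh_beta_top[OF a] \<open>i < q\<close>
    by (fastforce simp: sh_beta_def)
  then show ?thesis
    using sh_alpha_Suc[OF fa, of j] sh_beta_Suc[OF fa, of j] by (cases "Suc j \<in> a") auto
qed

text \<open>A shuffle \<open>a\<close> of \<open>(p, q)\<close> is the set of steps at which a monotone lattice path from
  \<open>(0, 0)\<close> to \<open>(p, q)\<close> moves in the first coordinate; \<open>sh_alpha a\<close> and \<open>sh_beta a\<close> are its two
  coordinates, and \<open>shuffle_simplex\<close> is the corresponding \<open>(p + q)\<close>-simplex of \<open>X \<times> Y\<close>.\<close>

definition shuffle_simplex :: "'a sset \<Rightarrow> 'b sset \<Rightarrow> nat \<Rightarrow> nat \<Rightarrow> nat set \<Rightarrow> 'a \<Rightarrow> 'b \<Rightarrow> 'a \<times> 'b" where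
  "shuffle_simplex X Y p q a x y = (Act X p (p + q) (sh_alpha a) x, Act Y q (p + q) (sh_beta a) y)"

lemma sh_eq:
  "sh X Y ((p, x), (q, y))
   = (\<lambda>s. \<Sum>a\<in>shuffles p q. sh_sign a * gen (prod_sset X Y) (p + q, shuffle_simplex X Y p q a x y) s)"
  by (simp add: sh_def shuffle_simplex_def)

lemma shuffle_simplex_in:
  "is_sset X \<Longrightarrow> is_sset Y \<Longrightarrow> a \<in> shuffles p q \<Longrightarrow> x \<in> Simp X p \<Longrightarrow> y \<in> Simp Y q
   \<Longrightarrow> shuffle_simplex X Y p q a x y \<in> Simp (prod_sset X Y) (p + q)"
  by (simp add: shuffle_simplex_def Act_in is_mor_sh_alpha is_mor_sh_beta)

lemma perm4_shuffle_simplex: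
  "perm4 (shuffle_simplex (prod_sset X Y) (prod_sset U V) n m a (x, y) (u, v))
   = (shuffle_simplex X U n m a x u, shuffle_simplex Y V n m a y v)"
  by (simp add: perm4_def shuffle_simplex_def)

text \<open>If \<open>x = s_i x'\<close>, the path of \<open>a\<close> takes the first-coordinate step from \<open>i\<close> to \<open>i + 1\<close>
  at some \<open>j\<close>; there both coordinates of the pulled-back pair repeat.\<close>

lemma degenerate_shuffle_simplex_left:
  assumes X: "is_sset X" and Y: "is_sset Y" and a: "a \<in> shuffles p q"
    and x: "x \<in> Simp X p" and y: "y \<in> Simp Y q" and dx: "degenerate X p x"
  shows "degenerate (prod_sset X Y) (p + q) (shuffle_simplex X Y p q a x y)"
proof -
  obtain p' i x' where p: "p = Suc p'" and "i \<le> p'" and x': "x' \<in> Simp X p'"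
    and x_eq: "x = Act X p' p (sdeg i) x'"
    using dx unfolding degenerate_def by blast
  obtain j where j: "j < p + q" "sh_alpha a j = i" "sh_alpha a (Suc j) = Suc i"
    "sh_beta a j = sh_beta a (Suc j)"
    using exists_step_sh_alpha[OF a, of i] \<open>i \<le> p'\<close> p by auto
  have s: "is_mor p p' (sdeg i)"
    using is_mor_sdeg[of i p] \<open>i \<le> p'\<close> p by simp
  have "Act X p (p + q) (sh_alpha a) x = Act X p' (p + q) (sdeg i \<circ> sh_alpha a) x'"
    unfolding x_eq by (rule Act_Act[OF X x' s is_mor_sh_alpha[OF a]]) simp
  moreover have "degenerate (prod_sset X Y) (p + q)
      (Act X p' (p + q) (sdeg i \<circ> sh_alpha a) x', Act Y q (p + q) (sh_beta a) y)"
    using j by (intro degenerate_pair_if_repeat[OF X Y x' y _ is_mor_sh_beta[OF a]]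
        is_mor_comp[OF s is_mor_sh_alpha[OF a]]) (auto simp: sdeg_def)
  ultimately show ?thesis
    by (simp add: shuffle_simplex_def)
qed

lemma degenerate_shuffle_simplex_right:
  assumes X: "is_sset X" and Y: "is_sset Y" and a: "a \<in> shuffles p q"
    and x: "x \<in> Simp X p" and y: "y \<in> Simp Y q" and dy: "degenerate Y q y"
  shows "degenerate (prod_sset X Y) (p + q) (shuffle_simplex X Y p q a x y)"
proof -
  obtain q' i y' where q: "q = Suc q'" and "i \<le> q'" and y': "y' \<in> Simp Y q'"
    and y_eq: "y = Act Y q' q (sdeg i) y'"
    using dy unfolding degenerate_def by blast
  obtain j where j: "j < p + q" "sh_beta a j = i" "sh_beta a (Suc j) = Suc i"
    "sh_alpha a j = sh_alpha a (Suc j)"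
    using exists_step_sh_beta[OF a, of i] \<open>i \<le> q'\<close> q by auto
  have s: "is_mor q q' (sdeg i)"
    using is_mor_sdeg[of i q] \<open>i \<le> q'\<close> q by simp
  have "Act Y q (p + q) (sh_beta a) y = Act Y q' (p + q) (sdeg i \<circ> sh_beta a) y'"
    unfolding y_eq by (rule Act_Act[OF Y y' s is_mor_sh_beta[OF a]]) simp
  moreover have "degenerate (prod_sset X Y) (p + q)
      (Act X p (p + q) (sh_alpha a) x, Act Y q' (p + q) (sdeg i \<circ> sh_beta a) y')"
    using j by (intro degenerate_pair_if_repeat[OF X Y x y' is_mor_sh_alpha[OF a]]
        is_mor_comp[OF s is_mor_sh_beta[OF a]]) (auto simp: sdeg_def)
  ultimately show ?thesis
    by (simp add: shuffle_simplex_def)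
qed

lemma Nbasis_factors_of_shuffle_simplex:
  assumes "is_sset X" "is_sset Y" "a \<in> shuffles p q" "x \<in> Simp X p" "y \<in> Simp Y q"
    and "(p + q, shuffle_simplex X Y p q a x y) \<in> Nbasis (prod_sset X Y)"
  shows "(p, x) \<in> Nbasis X" and "(q, y) \<in> Nbasis Y"
  using assms degenerate_shuffle_simplex_left[OF assms(1-5)] degenerate_shuffle_simplex_right[OF assms(1-5)]
  by (auto simp: Nbasis_iff)

definition shuffle_merge :: "nat set \<Rightarrow> nat \<Rightarrow> nat set \<Rightarrow> nat set" where
  "shuffle_merge a1 k a2 = a1 \<union> (\<lambda>i. i + k) ` a2"

context
  fixes a1 a2 :: "nat set" and p q r s :: nat
  assumes a1: "a1 \<in> shuffles p r" and a2: "a2 \<in> shuffles q s"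
begin

lemma shuffle_merge_in_shuffles: "shuffle_merge a1 (p + r) a2 \<in> shuffles (p + q) (r + s)"
proof -
  have "a1 \<inter> (\<lambda>i. i + (p + r)) ` a2 = {}" "card ((\<lambda>i. i + (p + r)) ` a2) = q"
    using in_shufflesD[OF a1] in_shufflesD[OF a2] by (force, simp add: card_image)
  then show ?thesis
    using in_shufflesD[OF a1] in_shufflesD[OF a2]
    by (auto simp: shuffles_def shuffle_merge_def card_Un_disjoint)
qed

lemma shuffle_merge_Int_lower: "shuffle_merge a1 (p + r) a2 \<inter> {1..p + r} = a1"
  using in_shufflesD[OF a1] in_shufflesD[OF a2] by (auto simp: shuffle_merge_def)

lemma shuffle_merge_Int_upper: "(\<lambda>i. i - (p + r)) ` (shuffle_merge a1 (p + r) a2 \<inter> {p + r<..}) = a2"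
proof -
  have "shuffle_merge a1 (p + r) a2 \<inter> {p + r<..} = (\<lambda>i. i + (p + r)) ` a2"
    using in_shufflesD[OF a1] in_shufflesD[OF a2] by (auto simp: shuffle_merge_def)
  then show ?thesis by (simp add: image_image)
qed

lemma sh_alpha_shuffle_merge_lower:
  "i \<le> p + r \<Longrightarrow> sh_alpha (shuffle_merge a1 (p + r) a2) i = sh_alpha a1 i"
  using in_shufflesD[OF a2] unfolding sh_alpha_def
  by (metis Int_assoc atLeastatMost_subset_iff inf.absorb_iff2 order_refl shuffle_merge_Int_lower)

lemma sh_alpha_shuffle_merge_upper:
  "sh_alpha (shuffle_merge a1 (p + r) a2) (i + (p + r)) = p + sh_alpha a2 i"
proof -
  have "shuffle_merge a1 (p + r) a2 \<inter> {1..i + (p + r)} = a1 \<union> (\<lambda>j. j + (p + r)) ` (a2 \<inter> {1..i})"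
    using in_shufflesD[OF a1] in_shufflesD[OF a2] by (auto simp: shuffle_merge_def)
  moreover have "card (a1 \<union> (\<lambda>j. j + (p + r)) ` (a2 \<inter> {1..i})) = p + card (a2 \<inter> {1..i})"
    using in_shufflesD[OF a1] in_shufflesD[OF a2]
    by (subst card_Un_disjoint) (force simp: card_image)+
  ultimately show ?thesis by (simp add: sh_alpha_def)
qed

lemma sh_beta_shuffle_merge_lower:
  "i \<le> p + r \<Longrightarrow> sh_beta (shuffle_merge a1 (p + r) a2) i = sh_beta a1 i"
  by (simp add: sh_beta_def sh_alpha_shuffle_merge_lower)

lemma sh_beta_shuffle_merge_upper:
  "sh_beta (shuffle_merge a1 (p + r) a2) (i + (p + r)) = r + sh_beta a2 i"
  using sh_alpha_le[of a2 i] by (simp add: sh_beta_def sh_alpha_shuffle_merge_upper)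

lemma sh_sign_shuffle_merge:
  "(sh_sign (shuffle_merge a1 (p + r) a2) :: 'r::comm_ring_1) = (-1) ^ (q * r) * sh_sign a1 * sh_sign a2"
proof -
  define k where "k = p + r"
  define inv where "inv b = {(i, j). i \<in> b \<and> j \<notin> b \<and> 1 \<le> j \<and> j < i}" for b :: "nat set"
  have fin_inv: "finite (inv b)" if "finite b" for b
    by (rule finite_subset[of _ "b \<times> {..Max b}"]) (use that in \<open>auto simp: inv_def intro: less_imp_le order_trans[OF _ Max_ge]\<close>)
  have s1: "a1 \<subseteq> {1..k}" "card a1 = p" "finite a1" using in_shufflesD[OF a1] by (auto simp: k_def)
  have s2: "a2 \<subseteq> {1..q+s}" "card a2 = q" "finite a2" using in_shufflesD[OF a2] by auto
  define S2 where "S2 = (\<lambda>(i, j). (i + k, j + k)) ` inv a2"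
  define S3 where "S3 = (\<lambda>i. i + k) ` a2 \<times> ({1..k} - a1)"
  text \<open>The inversions of the merged shuffle are those of \<open>a1\<close>, the shifted ones of \<open>a2\<close>, and
    all \<open>q * r\<close> pairs of a shifted element of \<open>a2\<close> with one of the \<open>r\<close> gaps of \<open>a1\<close>.\<close>
  have inv_merge: "inv (shuffle_merge a1 k a2) = inv a1 \<union> S2 \<union> S3"
  proof (rule set_eqI, rule iffI)
    fix x assume x: "x \<in> inv (shuffle_merge a1 k a2)"
    obtain i j where ij: "x = (i, j)" by (cases x)
    show "x \<in> inv a1 \<union> S2 \<union> S3"
    proof (cases "i \<in> a1")
      case True
      then show ?thesis using x ij s1 by (auto simp: inv_def shuffle_merge_def)
    next
      case False
      then obtain i' where i': "i' \<in> a2" "i = i' + k"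
        using x ij by (auto simp: inv_def shuffle_merge_def)
      show ?thesis
      proof (cases "j \<le> k")
        case True
        then show ?thesis using x ij i' by (auto simp: inv_def shuffle_merge_def S3_def)
      next
        case False
        have j: "j = j - k + k" using False by simp
        have "j - k \<notin> a2"
        proof
          assume "j - k \<in> a2"
          then have "j \<in> (\<lambda>i. i + k) ` a2" by (subst j) (rule imageI)
          then show False using x ij by (auto simp: inv_def shuffle_merge_def)
        qed
        then have "(i', j - k) \<in> inv a2"
          using x ij i' False by (auto simp: inv_def shuffle_merge_def)
        then show ?thesis using ij i' j by (auto simp: S2_def intro!: image_eqI[of _ _ "(i', j - k)"])
      qed
    qed
  next
    fix x assume "x \<in> inv a1 \<union> S2 \<union> S3"
    then show "x \<in> inv (shuffle_merge a1 k a2)"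
      using s1 s2 by (auto simp: inv_def shuffle_merge_def S2_def S3_def)
  qed
  have disj12: "inv a1 \<inter> S2 = {}"
    using s1 by (auto simp: inv_def S2_def)
  have disj3: "(inv a1 \<union> S2) \<inter> S3 = {}"
    using s1 s2 by (fastforce simp: inv_def S2_def S3_def)
  have "card S2 = card (inv a2)"
    unfolding S2_def by (rule card_image) (auto simp: inj_on_def)
  moreover have "card S3 = q * r"
    using s1 s2 by (simp add: S3_def card_cartesian_product card_image card_Diff_subset k_def)
  ultimately have "card (inv (shuffle_merge a1 k a2)) = card (inv a1) + card (inv a2) + q * r"
    unfolding inv_merge using s1 s2 fin_inv disj12 disj3
    by (simp add: card_Un_disjoint S2_def S3_def)
  then show ?thesis
    by (simp add: sh_sign_def inv_def k_def power_add)
qed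

end

lemma shuffle_split:
  assumes A: "A \<in> shuffles n m" and k: "k \<le> n + m"
  defines "p \<equiv> sh_alpha A k"
  defines "a1 \<equiv> A \<inter> {1..k}" and "a2 \<equiv> (\<lambda>i. i - k) ` (A \<inter> {k<..})"
  shows "p \<le> n" and "k - p \<le> m" and "a1 \<in> shuffles p (k - p)"
    and "a2 \<in> shuffles (n - p) (m - (k - p))" and "shuffle_merge a1 k a2 = A"
proof -
  have sA: "A \<subseteq> {1..n+m}" "card A = n" "finite A" using in_shufflesD[OF A] by auto
  show pn: "p \<le> n"
    using sh_alpha_mono[OF k, of A] sh_alpha_top[OF A] by (simp add: p_def)
  have pk: "p \<le> k" using sh_alpha_le by (simp add: p_def)
  show km: "k - p \<le> m"
    using sh_beta_mono[OF sA(3) k] sh_beta_top[OF A] by (simp add: sh_beta_def p_def)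
  show "a1 \<in> shuffles p (k - p)"
    using pk sA by (auto simp: shuffles_def a1_def p_def sh_alpha_def)
  have inj: "inj_on (\<lambda>i. i - k) (A \<inter> {k<..})" by (auto simp: inj_on_def)
  have "A = a1 \<union> (A \<inter> {k<..})" "a1 \<inter> (A \<inter> {k<..}) = {}"
    using sA by (auto simp: a1_def)
  then have "card A = card a1 + card (A \<inter> {k<..})"
    using sA(3) by (metis card_Un_disjoint finite_Un)
  then have "card a2 = n - p"
    using sA by (simp add: a2_def card_image[OF inj] a1_def p_def sh_alpha_def)
  moreover have "a2 \<subseteq> {1..(n - p) + (m - (k - p))}"
    using sA pn km pk by (force simp: a2_def)
  ultimately show "a2 \<in> shuffles (n - p) (m - (k - p))"
    by (simp add: shuffles_def)
  have "(\<lambda>i. i + k) ` a2 = A \<inter> {k<..}"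
    by (force simp: a2_def image_image intro: image_eqI)
  then show "shuffle_merge a1 k a2 = A"
    using sA by (auto simp: shuffle_merge_def a1_def)
qed

lemma bij_betw_shuffle_merge:
  "bij_betw (\<lambda>((p, r), (a1, a2)). (shuffle_merge a1 (p + r) a2, p + r))
     (SIGMA (p, r):{0..n} \<times> {0..m}. shuffles p r \<times> shuffles (n - p) (m - r))
     (shuffles n m \<times> {0..n + m})"
proof -
  have merge: "sh_alpha (shuffle_merge a1 (p + r) a2) (p + r) = p"
    "shuffle_merge a1 (p + r) a2 \<inter> {1..p + r} = a1"
    "(\<lambda>i. i - (p + r)) ` (shuffle_merge a1 (p + r) a2 \<inter> {p + r<..}) = a2"
    "p \<le> n \<Longrightarrow> r \<le> m \<Longrightarrow> shuffle_merge a1 (p + r) a2 \<in> shuffles n m"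
    if a1: "a1 \<in> shuffles p r" and a2: "a2 \<in> shuffles (n - p) (m - r)" for p r a1 a2
    using sh_alpha_shuffle_merge_lower[OF a1 a2, of "p + r"] sh_alpha_top[OF a1]
      shuffle_merge_Int_lower[OF a1 a2] shuffle_merge_Int_upper[OF a1 a2]
      shuffle_merge_in_shuffles[OF a1 a2] by simp_all
  show ?thesis
    by (rule bij_betw_byWitness[where f' = "\<lambda>(A, k). ((sh_alpha A k, k - sh_alpha A k),
                                   (A \<inter> {1..k}, (\<lambda>i. i - k) ` (A \<inter> {k<..})))"])
      (use merge shuffle_split[of _ n m] sh_alpha_le in auto)
qed

context
  fixes a1 a2 :: "nat set" and n m p r :: nat
  assumes a1: "a1 \<in> shuffles p r" and a2: "a2 \<in> shuffles (n - p) (m - r)"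
    and pn: "p \<le> n" and rm: "r \<le> m"
begin

lemma shuffle_merge_in_shuffles_of_le: "shuffle_merge a1 (p + r) a2 \<in> shuffles n m"
  using shuffle_merge_in_shuffles[OF a1 a2] pn rm by simp

lemma front_face_shuffle_simplex:
  assumes X: "is_sset X" and U: "is_sset U" and x: "x \<in> Simp X n" and u: "u \<in> Simp U m"
  shows "front_face (prod_sset X U) (n + m) (p + r) (shuffle_simplex X U n m (shuffle_merge a1 (p + r) a2) x u)
       = shuffle_simplex X U p r a1 (front_face X n p x) (front_face U m r u)"
proof -
  note A = shuffle_merge_in_shuffles_of_le
  have "Act X n (p + r) (sh_alpha (shuffle_merge a1 (p + r) a2)) x = Act X n (p + r) (sh_alpha a1) x"
    using sh_alpha_shuffle_merge_lower[OF a1 a2] is_mor_sh_alpha[OF a1] pn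
    by (intro Act_cong[OF X x]) (auto simp: is_mor_def)
  moreover have "Act U m (p + r) (sh_beta (shuffle_merge a1 (p + r) a2)) u = Act U m (p + r) (sh_beta a1) u"
    using sh_beta_shuffle_merge_lower[OF a1 a2] is_mor_sh_beta[OF a1] rm
    by (intro Act_cong[OF U u]) (auto simp: is_mor_def)
  ultimately show ?thesis
    using pn rm
    by (simp add: shuffle_simplex_def front_face_prod_sset front_face_Act[OF X x] front_face_Act[OF U u]
        Act_front_face[OF X x] Act_front_face[OF U u] is_mor_sh_alpha[OF A] is_mor_sh_beta[OF A]
        is_mor_sh_alpha[OF a1] is_mor_sh_beta[OF a1])
qed

lemma back_face_shuffle_simplex:
  assumes Y: "is_sset Y" and V: "is_sset V" and y: "y \<in> Simp Y n" and v: "v \<in> Simp V m"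
  shows "back_face (prod_sset Y V) (n + m) (p + r) (shuffle_simplex Y V n m (shuffle_merge a1 (p + r) a2) y v)
       = shuffle_simplex Y V (n - p) (m - r) a2 (back_face Y n p y) (back_face V m r v)"
proof -
  note A = shuffle_merge_in_shuffles_of_le
  have deg: "n - p + (m - r) = n + m - (p + r)" using pn rm by simp
  have "Act Y n (n + m - (p + r)) (\<lambda>i. sh_alpha (shuffle_merge a1 (p + r) a2) (i + (p + r))) y
      = Act Y n (n + m - (p + r)) (\<lambda>i. sh_alpha a2 i + p) y"
    using sh_alpha_shuffle_merge_upper[OF a1 a2] is_mor_sh_alpha[OF a2] pn
    by (intro Act_cong[OF Y y]) (auto simp: is_mor_def deg)
  moreover have "Act V m (n + m - (p + r)) (\<lambda>i. sh_beta (shuffle_merge a1 (p + r) a2) (i + (p + r))) v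
      = Act V m (n + m - (p + r)) (\<lambda>i. sh_beta a2 i + r) v"
    using sh_beta_shuffle_merge_upper[OF a1 a2] is_mor_sh_beta[OF a2] rm
    by (intro Act_cong[OF V v]) (auto simp: is_mor_def deg)
  ultimately show ?thesis
    using pn rm is_mor_sh_alpha[OF a2] is_mor_sh_beta[OF a2]
    by (simp add: shuffle_simplex_def back_face_prod_sset back_face_Act[OF Y y] back_face_Act[OF V v]
        Act_back_face[OF Y y] Act_back_face[OF V v] is_mor_sh_alpha[OF A] is_mor_sh_beta[OF A] deg)
qed

end

section \<open>Interchange of shuffle and Alexander--Whitney maps\<close>

context
  fixes X :: "'x sset" and Y :: "'y sset" and U :: "'u sset" and V :: "'v sset"
    and a1 a2 :: "nat set" and n m p r :: nat and x y u v
  assumes X: "is_sset X" and Y: "is_sset Y" and U: "is_sset U" and V: "is_sset V"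
    and a1: "a1 \<in> shuffles p r" and a2: "a2 \<in> shuffles (n - p) (m - r)"
    and pn: "p \<le> n" and rm: "r \<le> m"
    and x: "x \<in> Simp X n" and y: "y \<in> Simp Y n" and u: "u \<in> Simp U m" and v: "v \<in> Simp V m"
begin

lemma Nbasis_of_Nbasis_shuffle_faces:
  defines "A \<equiv> shuffle_merge a1 (p + r) a2"
  assumes F: "(p + r, front_face (prod_sset X U) (n + m) (p + r) (shuffle_simplex X U n m A x u))
      \<in> Nbasis (prod_sset X U)"
    and B: "(n + m - (p + r), back_face (prod_sset Y V) (n + m) (p + r) (shuffle_simplex Y V n m A y v))
      \<in> Nbasis (prod_sset Y V)"
  shows "(p, front_face X n p x) \<in> Nbasis X \<and> (n - p, back_face Y n p y) \<in> Nbasis Y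
      \<and> (r, front_face U m r u) \<in> Nbasis U \<and> (m - r, back_face V m r v) \<in> Nbasis V"
    and "(n + m, (shuffle_simplex X U n m A x u, shuffle_simplex Y V n m A y v))
      \<in> Nbasis (prod_sset (prod_sset X U) (prod_sset Y V))"
proof -
  have deg: "n - p + (m - r) = n + m - (p + r)" using pn rm by simp
  have "(p + r, shuffle_simplex X U p r a1 (front_face X n p x) (front_face U m r u)) \<in> Nbasis (prod_sset X U)"
    using F unfolding A_def front_face_shuffle_simplex[OF a1 a2 pn rm X U x u] .
  then have "(p, front_face X n p x) \<in> Nbasis X \<and> (r, front_face U m r u) \<in> Nbasis U"
    using Nbasis_factors_of_shuffle_simplex[OF X U a1] front_face_in[OF X x pn] front_face_in[OF U u rm]
    by blast
  moreover have "(n - p + (m - r), shuffle_simplex Y V (n - p) (m - r) a2 (back_face Y n p y) (back_face V m r v))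
      \<in> Nbasis (prod_sset Y V)"
    using B unfolding A_def back_face_shuffle_simplex[OF a1 a2 pn rm Y V y v] deg .
  then have "(n - p, back_face Y n p y) \<in> Nbasis Y \<and> (m - r, back_face V m r v) \<in> Nbasis V"
    using Nbasis_factors_of_shuffle_simplex[OF Y V a2] back_face_in[OF Y y pn] back_face_in[OF V v rm]
    by blast
  ultimately show "(p, front_face X n p x) \<in> Nbasis X \<and> (n - p, back_face Y n p y) \<in> Nbasis Y
      \<and> (r, front_face U m r u) \<in> Nbasis U \<and> (m - r, back_face V m r v) \<in> Nbasis V"
    by blast
  have A: "A \<in> shuffles n m"
    unfolding A_def by (rule shuffle_merge_in_shuffles_of_le[OF a1 a2 pn rm])
  have "\<not> degenerate (prod_sset (prod_sset X U) (prod_sset Y V)) (n + m)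
      (shuffle_simplex X U n m A x u, shuffle_simplex Y V n m A y v)"
  proof
    assume "degenerate (prod_sset (prod_sset X U) (prod_sset Y V)) (n + m)
      (shuffle_simplex X U n m A x u, shuffle_simplex Y V n m A y v)"
    from degenerate_front_or_back_face[OF is_sset_prod_sset[OF X U] is_sset_prod_sset[OF Y V] this, of "p + r"]
    show False
      using F B pn rm unfolding Nbasis_iff by simp
  qed
  then show "(n + m, (shuffle_simplex X U n m A x u, shuffle_simplex Y V n m A y v))
      \<in> Nbasis (prod_sset (prod_sset X U) (prod_sset Y V))"
    using shuffle_simplex_in[OF X U A x u] shuffle_simplex_in[OF Y V A y v] by (simp add: Nbasis_iff)
qed

text \<open>Both sides vanish unless the two faces are non-degenerate, and then all the other
  normalisation conditions hold as well.\<close>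

lemma shuffle_merge_summand:
  defines "A \<equiv> shuffle_merge a1 (p + r) a2"
  shows "(sh_sign A :: 'r::comm_ring_1)
      * of_bool ((n + m, shuffle_simplex (prod_sset X Y) (prod_sset U V) n m A (x, y) (u, v))
                   \<in> Nbasis (prod_sset (prod_sset X Y) (prod_sset U V))
               \<and> (n + m, (shuffle_simplex X U n m A x u, shuffle_simplex Y V n m A y v))
                   \<in> Nbasis (prod_sset (prod_sset X U) (prod_sset Y V)))
      * (gen (prod_sset X U) (p + r, front_face (prod_sset X U) (n + m) (p + r) (shuffle_simplex X U n m A x u)) t1
       * gen (prod_sset Y V) (n + m - (p + r), back_face (prod_sset Y V) (n + m) (p + r) (shuffle_simplex Y V n m A y v)) t2)
    = of_bool ((p, front_face X n p x) \<in> Nbasis X \<and> (n - p, back_face Y n p y) \<in> Nbasis Y)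
      * of_bool ((r, front_face U m r u) \<in> Nbasis U \<and> (m - r, back_face V m r v) \<in> Nbasis V)
      * (-1) ^ ((n - p) * r)
      * ((sh_sign a1 * gen (prod_sset X U) (p + r, shuffle_simplex X U p r a1 (front_face X n p x) (front_face U m r u)) t1)
       * (sh_sign a2 * gen (prod_sset Y V) (n - p + (m - r),
            shuffle_simplex Y V (n - p) (m - r) a2 (back_face Y n p y) (back_face V m r v)) t2))"
proof -
  let ?F = "front_face (prod_sset X U) (n + m) (p + r) (shuffle_simplex X U n m A x u)"
  let ?B = "back_face (prod_sset Y V) (n + m) (p + r) (shuffle_simplex Y V n m A y v)"
  have deg: "n - p + (m - r) = n + m - (p + r)" using pn rm by simp
  have faces: "shuffle_simplex X U p r a1 (front_face X n p x) (front_face U m r u) = ?F"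
      "shuffle_simplex Y V (n - p) (m - r) a2 (back_face Y n p y) (back_face V m r v) = ?B"
    unfolding A_def
    by (simp_all only: front_face_shuffle_simplex[OF a1 a2 pn rm X U x u]
        back_face_shuffle_simplex[OF a1 a2 pn rm Y V y v])
  show ?thesis
  proof (cases "(p + r, ?F) \<in> Nbasis (prod_sset X U) \<and> (n + m - (p + r), ?B) \<in> Nbasis (prod_sset Y V)")
    case True
    then have "(n + m, shuffle_simplex (prod_sset X Y) (prod_sset U V) n m A (x, y) (u, v))
                 \<in> Nbasis (prod_sset (prod_sset X Y) (prod_sset U V))"
      using Nbasis_of_Nbasis_shuffle_faces(2) Nbasis_perm4_iff perm4_shuffle_simplex
      unfolding A_def by metis
    moreover have "(sh_sign A :: 'r) = (-1) ^ ((n - p) * r) * sh_sign a1 * sh_sign a2"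
      unfolding A_def by (rule sh_sign_shuffle_merge[OF a1 a2])
    ultimately show ?thesis
      using True Nbasis_of_Nbasis_shuffle_faces unfolding faces deg A_def
      by (simp add: algebra_simps)
  next
    case False
    then have "gen (prod_sset X U) (p + r, ?F) t1 * gen (prod_sset Y V) (n + m - (p + r), ?B) t2 = (0::'r)"
      by (auto simp: gen_def)
    then show ?thesis
      unfolding faces deg by (simp add: algebra_simps)
  qed
qed

end

lemma finite_support_sh: "finite {s. sh X Y b s \<noteq> 0}"
  unfolding sh_def by (intro finite_support_sum finite_support_mult_left finite_support_gen finite_shuffles)

lemma mid_sym_eq:
  "mid_sym ((a, b), (c, d)) = (\<lambda>s. (-1) ^ (fst b * fst c) * delta ((a, c), (b, d)) s)"
  by (auto simp: mid_sym_def delta_def fun_eq_iff)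

lemma aw_eq:
  "aw X Y (n, (x, y)) = (\<lambda>s. \<Sum>p\<in>{0..n}.
     of_bool ((p, front_face X n p x) \<in> Nbasis X \<and> (n - p, back_face Y n p y) \<in> Nbasis Y)
     * delta ((p, front_face X n p x), (n - p, back_face Y n p y)) s)"
  by (simp add: aw_def gen2_eq)

lemma lin_tens_sh_sh_lin_mid_sym_tens_aw_aw:
  "lin (tens (sh X U) (sh Y V)) (lin mid_sym (tens (aw X Y) (aw U V) ((n, (x, y)), (m, (u, v))))) t
   = (\<Sum>(p, r)\<in>{0..n} \<times> {0..m}.
        of_bool ((p, front_face X n p x) \<in> Nbasis X \<and> (n - p, back_face Y n p y) \<in> Nbasis Y)
      * of_bool ((r, front_face U m r u) \<in> Nbasis U \<and> (m - r, back_face V m r v) \<in> Nbasis V)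
      * (-1) ^ ((n - p) * r)
      * (sh X U ((p, front_face X n p x), (r, front_face U m r u)) (fst t)
       * sh Y V ((n - p, back_face Y n p y), (m - r, back_face V m r v)) (snd t)))"
proof -
  let ?cXY = "\<lambda>p. of_bool ((p, front_face X n p x) \<in> Nbasis X \<and> (n - p, back_face Y n p y) \<in> Nbasis Y)"
  let ?cUV = "\<lambda>r. of_bool ((r, front_face U m r u) \<in> Nbasis U \<and> (m - r, back_face V m r v) \<in> Nbasis V)"
  let ?aXY = "\<lambda>p. ((p, front_face X n p x), (n - p, back_face Y n p y))"
  let ?aUV = "\<lambda>r. ((r, front_face U m r u), (m - r, back_face V m r v))"
  have tens_aw_aw: "tens (aw X Y) (aw U V) ((n, (x, y)), (m, (u, v)))
      = (\<lambda>s. \<Sum>q\<in>{0..n} \<times> {0..m}. ?cXY (fst q) * ?cUV (snd q) * delta (?aXY (fst q), ?aUV (snd q)) s)"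
    by (rule ext) (simp only: tens_def aw_eq fst_conv snd_conv sum_delta_times_sum_delta)
  have "lin mid_sym (tens (aw X Y) (aw U V) ((n, (x, y)), (m, (u, v))))
      = (\<lambda>s. \<Sum>q\<in>{0..n} \<times> {0..m}. ?cXY (fst q) * ?cUV (snd q) * mid_sym (?aXY (fst q), ?aUV (snd q)) s)"
    unfolding tens_aw_aw by (rule lin_sum_delta) simp
  also have "\<dots> = (\<lambda>s. \<Sum>q\<in>{0..n} \<times> {0..m}. (?cXY (fst q) * ?cUV (snd q) * (-1) ^ ((n - fst q) * snd q))
      * delta ((fst (?aXY (fst q)), fst (?aUV (snd q))), (snd (?aXY (fst q)), snd (?aUV (snd q)))) s)"
    by (simp add: mid_sym_eq mult.assoc)
  finally have mid: "lin mid_sym (tens (aw X Y) (aw U V) ((n, (x, y)), (m, (u, v))))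
      = (\<lambda>s. \<Sum>q\<in>{0..n} \<times> {0..m}. (?cXY (fst q) * ?cUV (snd q) * (-1) ^ ((n - fst q) * snd q))
      * delta ((fst (?aXY (fst q)), fst (?aUV (snd q))), (snd (?aXY (fst q)), snd (?aUV (snd q)))) s)" .
  have "lin (tens (sh X U) (sh Y V)) (lin mid_sym (tens (aw X Y) (aw U V) ((n, (x, y)), (m, (u, v)))))
      = (\<lambda>t. \<Sum>q\<in>{0..n} \<times> {0..m}. (?cXY (fst q) * ?cUV (snd q) * (-1) ^ ((n - fst q) * snd q))
      * tens (sh X U) (sh Y V) ((fst (?aXY (fst q)), fst (?aUV (snd q))), (snd (?aXY (fst q)), snd (?aUV (snd q)))) t)"
    unfolding mid by (rule lin_sum_delta) simp
  from fun_cong[OF this, of t] show ?thesis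
    by (simp add: tens_def split_def)
qed

lemma lin_aw_lin_Nmap_perm4_sh:
  "lin (aw (prod_sset X U) (prod_sset Y V))
     (lin (Nmap (prod_sset (prod_sset X U) (prod_sset Y V)) perm4)
       (sh (prod_sset X Y) (prod_sset U V) ((n, (x, y)), (m, (u, v))))) t
   = (\<Sum>(A, k)\<in>shuffles n m \<times> {0..n + m}. sh_sign A
      * of_bool ((n + m, shuffle_simplex (prod_sset X Y) (prod_sset U V) n m A (x, y) (u, v))
                   \<in> Nbasis (prod_sset (prod_sset X Y) (prod_sset U V))
               \<and> (n + m, (shuffle_simplex X U n m A x u, shuffle_simplex Y V n m A y v))
                   \<in> Nbasis (prod_sset (prod_sset X U) (prod_sset Y V)))
      * (gen (prod_sset X U) (k, front_face (prod_sset X U) (n + m) k (shuffle_simplex X U n m A x u)) (fst t)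
       * gen (prod_sset Y V) (n + m - k, back_face (prod_sset Y V) (n + m) k (shuffle_simplex Y V n m A y v)) (snd t)))"
proof -
  let ?Z = "\<lambda>A. shuffle_simplex (prod_sset X Y) (prod_sset U V) n m A (x, y) (u, v)"
  let ?P = "\<lambda>A. (shuffle_simplex X U n m A x u, shuffle_simplex Y V n m A y v)"
  let ?c = "\<lambda>A. of_bool ((n + m, ?Z A) \<in> Nbasis (prod_sset (prod_sset X Y) (prod_sset U V)))"
  let ?c' = "\<lambda>A. of_bool ((n + m, ?P A) \<in> Nbasis (prod_sset (prod_sset X U) (prod_sset Y V)))"
  have sh_basis: "sh (prod_sset X Y) (prod_sset U V) ((n, (x, y)), (m, (u, v)))
      = (\<lambda>s. \<Sum>A\<in>shuffles n m. (sh_sign A * ?c A) * delta (n + m, ?Z A) s)"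
    by (simp add: sh_eq gen_eq mult.assoc)
  have "lin (Nmap (prod_sset (prod_sset X U) (prod_sset Y V)) perm4)
          (sh (prod_sset X Y) (prod_sset U V) ((n, (x, y)), (m, (u, v))))
      = (\<lambda>s. \<Sum>A\<in>shuffles n m. (sh_sign A * ?c A) * Nmap (prod_sset (prod_sset X U) (prod_sset Y V)) perm4 (n + m, ?Z A) s)"
    unfolding sh_basis by (rule lin_sum_delta) (rule finite_shuffles)
  also have "\<dots> = (\<lambda>s. \<Sum>A\<in>shuffles n m. (sh_sign A * ?c A * ?c' A) * delta (n + m, ?P A) s)"
    by (simp add: Nmap_def gen_eq perm4_shuffle_simplex mult.assoc)
  finally have Nmap_sh: "lin (Nmap (prod_sset (prod_sset X U) (prod_sset Y V)) perm4)
          (sh (prod_sset X Y) (prod_sset U V) ((n, (x, y)), (m, (u, v))))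
      = (\<lambda>s. \<Sum>A\<in>shuffles n m. (sh_sign A * ?c A * ?c' A) * delta (n + m, ?P A) s)" .
  have "lin (aw (prod_sset X U) (prod_sset Y V))
     (lin (Nmap (prod_sset (prod_sset X U) (prod_sset Y V)) perm4)
       (sh (prod_sset X Y) (prod_sset U V) ((n, (x, y)), (m, (u, v)))))
      = (\<lambda>t. \<Sum>A\<in>shuffles n m. (sh_sign A * ?c A * ?c' A) * aw (prod_sset X U) (prod_sset Y V) (n + m, ?P A) t)"
    unfolding Nmap_sh by (rule lin_sum_delta) (rule finite_shuffles)
  from fun_cong[OF this, of t] show ?thesis
    by (simp add: aw_def gen2_eq_gen_times_gen sum_distrib_left sum.cartesian_product
        of_bool_conj mult.assoc)
qed

lemma sh_aw_interchange_on_basis: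
  fixes X :: "'x sset" and Y :: "'y sset" and U :: "'u sset" and V :: "'v sset"
  assumes X: "is_sset X" and Y: "is_sset Y" and U: "is_sset U" and V: "is_sset V"
    and x: "x \<in> Simp X n" and y: "y \<in> Simp Y n" and u: "u \<in> Simp U m" and v: "v \<in> Simp V m"
  shows "lin (tens (sh X U) (sh Y V)) (lin (mid_sym :: _ \<Rightarrow> _ \<Rightarrow> 'r::comm_ring_1)
           (tens (aw X Y) (aw U V) ((n, (x, y)), (m, (u, v)))))
       = lin (aw (prod_sset X U) (prod_sset Y V)) (lin (Nmap (prod_sset (prod_sset X U) (prod_sset Y V)) perm4)
           (sh (prod_sset X Y) (prod_sset U V) ((n, (x, y)), (m, (u, v)))))" (is "?lhs = ?rhs")
proof
  fix t
  let ?L = "\<lambda>((p, r), (a1, a2)).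
      of_bool ((p, front_face X n p x) \<in> Nbasis X \<and> (n - p, back_face Y n p y) \<in> Nbasis Y)
      * of_bool ((r, front_face U m r u) \<in> Nbasis U \<and> (m - r, back_face V m r v) \<in> Nbasis V)
      * (-1) ^ ((n - p) * r)
      * ((sh_sign a1 * gen (prod_sset X U) (p + r, shuffle_simplex X U p r a1 (front_face X n p x) (front_face U m r u)) (fst t))
       * (sh_sign a2 * gen (prod_sset Y V) (n - p + (m - r),
            shuffle_simplex Y V (n - p) (m - r) a2 (back_face Y n p y) (back_face V m r v)) (snd t))) :: 'r"
  let ?R = "\<lambda>(A, k). sh_sign A
      * of_bool ((n + m, shuffle_simplex (prod_sset X Y) (prod_sset U V) n m A (x, y) (u, v))
                   \<in> Nbasis (prod_sset (prod_sset X Y) (prod_sset U V))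
               \<and> (n + m, (shuffle_simplex X U n m A x u, shuffle_simplex Y V n m A y v))
                   \<in> Nbasis (prod_sset (prod_sset X U) (prod_sset Y V)))
      * (gen (prod_sset X U) (k, front_face (prod_sset X U) (n + m) k (shuffle_simplex X U n m A x u)) (fst t)
       * gen (prod_sset Y V) (n + m - k, back_face (prod_sset Y V) (n + m) k (shuffle_simplex Y V n m A y v)) (snd t)) :: 'r"
  let ?merge = "\<lambda>((p, r), (a1, a2)). (shuffle_merge a1 (p + r) a2, p + r)"
  let ?I = "SIGMA (p, r):{0..n} \<times> {0..m}. shuffles p r \<times> shuffles (n - p) (m - r)"
  have "lin (tens (sh X U) (sh Y V)) (lin mid_sym (tens (aw X Y) (aw U V) ((n, (x, y)), (m, (u, v))))) t
      = (\<Sum>(p, r)\<in>{0..n} \<times> {0..m}. \<Sum>(a1, a2)\<in>shuffles p r \<times> shuffles (n - p) (m - r). ?L ((p, r), (a1, a2)))"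
    unfolding lin_tens_sh_sh_lin_mid_sym_tens_aw_aw sh_eq scaled_sum_times_sum
    by (simp add: split_def)
  also have "\<dots> = sum ?L ?I"
    by (simp add: sum.Sigma finite_shuffles split_def)
  also have "\<dots> = (\<Sum>w\<in>?I. ?R (?merge w))"
    by (rule sum.cong) (auto simp: shuffle_merge_summand[OF X Y U V _ _ _ _ x y u v])
  also have "\<dots> = sum ?R (shuffles n m \<times> {0..n + m})"
    by (rule sum.reindex_bij_betw[OF bij_betw_shuffle_merge])
  also have "\<dots> = lin (aw (prod_sset X U) (prod_sset Y V)) (lin (Nmap (prod_sset (prod_sset X U) (prod_sset Y V)) perm4)
           (sh (prod_sset X Y) (prod_sset U V) ((n, (x, y)), (m, (u, v))))) t"
    by (rule lin_aw_lin_Nmap_perm4_sh[symmetric])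
  finally show "?lhs t = ?rhs t" .
qed

lemma sh_aw_interchange:
  fixes X :: "'x sset" and Y :: "'y sset" and U :: "'u sset" and V :: "'v sset"
    and c :: "(nat \<times> ('x \<times> 'y)) \<times> (nat \<times> ('u \<times> 'v)) \<Rightarrow> 'r::comm_ring_1"
  assumes X: "is_sset X" and Y: "is_sset Y" and U: "is_sset U" and V: "is_sset V"
    and c: "fin_chain (Nbasis (prod_sset X Y) \<times> Nbasis (prod_sset U V)) c"
  shows "lin (tens (sh X U) (sh Y V)) (lin mid_sym (lin (tens (aw X Y) (aw U V)) c))
       = lin (aw (prod_sset X U) (prod_sset Y V))
           (lin (Nmap (prod_sset (prod_sset X U) (prod_sset Y V)) perm4)
             (lin (sh (prod_sset X Y) (prod_sset U V)) c))"
proof -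
  have fc: "finite {b. c b \<noteq> 0}"
    using c by (simp add: fin_chain_def)
  have tens_aw_aw: "finite {s. tens (aw X Y) (aw U V) b s \<noteq> 0}" for b
    by (intro finite_support_tens finite_support_aw)
  have "lin (tens (sh X U) (sh Y V)) (lin mid_sym (lin (tens (aw X Y) (aw U V)) c))
      = lin (\<lambda>b. lin (tens (sh X U) (sh Y V)) (lin mid_sym (tens (aw X Y) (aw U V) b))) c"
    by (simp add: lin_lin[OF fc] tens_aw_aw finite_support_lin finite_support_mid_sym)
  also have "\<dots> = lin (\<lambda>b. lin (aw (prod_sset X U) (prod_sset Y V))
      (lin (Nmap (prod_sset (prod_sset X U) (prod_sset Y V)) perm4) (sh (prod_sset X Y) (prod_sset U V) b))) c"
  proof (rule lin_cong)
    fix b assume "c b \<noteq> 0"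
    then have "b \<in> Nbasis (prod_sset X Y) \<times> Nbasis (prod_sset U V)"
      using c by (auto simp: fin_chain_def)
    then obtain n x y m u v where "b = ((n, (x, y)), (m, (u, v)))"
      and "x \<in> Simp X n" "y \<in> Simp Y n" "u \<in> Simp U m" "v \<in> Simp V m"
      by (auto simp: Nbasis_iff)
    then show "lin (tens (sh X U) (sh Y V)) (lin mid_sym (tens (aw X Y) (aw U V) b))
      = lin (aw (prod_sset X U) (prod_sset Y V))
          (lin (Nmap (prod_sset (prod_sset X U) (prod_sset Y V)) perm4) (sh (prod_sset X Y) (prod_sset U V) b))"
      using sh_aw_interchange_on_basis[OF X Y U V] by blast
  qed
  also have "\<dots> = lin (aw (prod_sset X U) (prod_sset Y V))
           (lin (Nmap (prod_sset (prod_sset X U) (prod_sset Y V)) perm4)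
             (lin (sh (prod_sset X Y) (prod_sset U V)) c))"
    by (simp add: lin_lin[OF fc] finite_support_sh finite_support_lin finite_support_Nmap)
  finally show ?thesis .
qed

section \<open>Unit and counit\<close>

lemma epsN_eta: "epsN (eta r) = r"
  by (simp add: epsN_def eta_def)

lemma epsN_Nmap_sh_pt:
  assumes c: "fin_chain (Nbasis pt \<times> Nbasis pt) c"
  shows "epsN (lin (Nmap pt (\<lambda>_. ())) (lin (sh pt pt) c))
       = (\<Sum>b\<in>{b. c b \<noteq> 0}. c b * epsN (\<lambda>a. if a = fst b then 1 else 0)
                                * epsN (\<lambda>a. if a = snd b then 1 else 0))"
proof -
  define b0 where "b0 = ((0::nat, ()), (0::nat, ()))"
  have c0: "c b = 0" if "b \<noteq> b0" for b
    using c that by (cases b) (auto simp: fin_chain_def b0_def Nbasis_pt)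
  have "shuffles 0 0 = {{}}"
    by (auto simp: shuffles_def)
  then have sh_b0: "sh pt pt b0 = delta (0, ((), ()))"
    by (auto simp: sh_def b0_def sh_sign_def gen_def delta_def fun_eq_iff Nbasis_pt_pt)
  have "lin (sh pt pt) c = (\<lambda>s. c b0 * delta (0, ((), ())) s)"
    by (rule ext) (simp add: lin_eq_single[of b0 c, OF c0] sh_b0)
  then have "lin (Nmap pt (\<lambda>_. ())) (lin (sh pt pt) c) (0, ()) = c b0"
    by (simp add: lin_eq_single[of "(0, ((), ()))"] delta_def Nmap_def gen_def Nbasis_pt)
  moreover have "(\<Sum>b\<in>{b. c b \<noteq> 0}. c b * epsN (\<lambda>a. if a = fst b then 1 else 0)
                                * epsN (\<lambda>a. if a = snd b then 1 else 0))
      = (\<Sum>b\<in>{b0}. c b * epsN (\<lambda>a. if a = fst b then 1 else 0) * epsN (\<lambda>a. if a = snd b then 1 else 0))"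
    by (rule sum.mono_neutral_left) (use c0 in auto)
  ultimately show ?thesis
    by (simp add: epsN_def b0_def)
qed

lemma aw_Nmap_eta_pt:
  "lin (aw pt pt) (lin (Nmap (prod_sset pt pt) (\<lambda>_. ((), ()))) (eta r))
   = (\<lambda>t. eta r (fst t) * eta 1 (snd t))"
proof
  fix t :: "(nat \<times> unit) \<times> (nat \<times> unit)"
  have "lin (Nmap (prod_sset pt pt) (\<lambda>_. ((), ()))) (eta r) = (\<lambda>s. r * delta (0, ((), ())) s)"
    by (rule ext, subst lin_eq_single[of "(0, ())"])
      (auto simp: eta_def Nmap_def gen_def delta_def Nbasis_pt_pt)
  then have "lin (aw pt pt) (lin (Nmap (prod_sset pt pt) (\<lambda>_. ((), ()))) (eta r)) t
      = r * aw pt pt (0, ((), ())) t"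
    by (simp add: lin_eq_single[of "(0, ((), ()))"] delta_def)
  also have "\<dots> = eta r (fst t) * eta 1 (snd t)"
    by (cases t) (auto simp: aw_def gen2_def eta_def Nbasis_pt)
  finally show "lin (aw pt pt) (lin (Nmap (prod_sset pt pt) (\<lambda>_. ((), ()))) (eta r)) t
      = eta r (fst t) * eta 1 (snd t)" .
qed

theorem mainTheorem17:
  fixes X :: "'x sset" and Y :: "'y sset" and U :: "'u sset" and V :: "'v sset"
  assumes "is_sset X" and "is_sset Y" and "is_sset U" and "is_sset V"
  shows
    "(\<forall>c :: (nat \<times> ('x \<times> 'y)) \<times> (nat \<times> ('u \<times> 'v)) \<Rightarrow> 'r::comm_ring_1.
        fin_chain (Nbasis (prod_sset X Y) \<times> Nbasis (prod_sset U V)) c \<longrightarrow>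
        lin (tens (sh X U) (sh Y V)) (lin mid_sym (lin (tens (aw X Y) (aw U V)) c))
        = lin (aw (prod_sset X U) (prod_sset Y V))
              (lin (Nmap (prod_sset (prod_sset X U) (prod_sset Y V)) perm4)
                   (lin (sh (prod_sset X Y) (prod_sset U V)) c)))
     \<and> (\<forall>r :: 'r. epsN (eta r) = r)
     \<and> (\<forall>c :: (nat \<times> unit) \<times> (nat \<times> unit) \<Rightarrow> 'r.
          fin_chain (Nbasis pt \<times> Nbasis pt) c \<longrightarrow>
          epsN (lin (Nmap pt (\<lambda>_. ())) (lin (sh pt pt) c))
          = (\<Sum>b\<in>{b. c b \<noteq> 0}. c b * epsN (\<lambda>a. if a = fst b then 1 else 0)
                                       * epsN (\<lambda>a. if a = snd b then 1 else 0)))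
     \<and> (\<forall>r :: 'r.
          lin (aw pt pt) (lin (Nmap (prod_sset pt pt) (\<lambda>_. ((), ()))) (eta r))
          = (\<lambda>t. eta r (fst t) * eta 1 (snd t)))"
  using sh_aw_interchange[OF assms] epsN_eta epsN_Nmap_sh_pt aw_Nmap_eta_pt by blast

end
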